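(* Let $L\in(\Sigma^4_{2,8})^\star$ and $F=\langle L,q(a,b,c)^4\rangle\in\mathbb{R}[a,b,c]_4$, and suppose that the set $\mathcal{V}(F)(\mathbb{R})\subset\mathbb{P}^2(\mathbb{R})$ of real zeros of $F$ is finite. Then $|\mathcal{V}(F)(\mathbb{R})|\le3$. Equivalently: every ternary quartic $F$ lying in $\partial\Sigma^2_{3,4}\cap U$ with only finitely many real projective zeros has at most $3$ real zeros.
   Context: Apolarity pairing on $\mathbb{R}[x,y]$: $\langle x^{\alpha_1}y^{\alpha_2},x^{\beta_1}y^{\beta_2}\rangle=\frac{\beta_1!\beta_2!}{\alpha_1!\alpha_2!}x^{\beta_1-\alpha_1}y^{\beta_2-\alpha_2}$ if $\alpha_i\le\beta_i$, and $0$ otherwise, extended bilinearly. $\Sigma^4_{2,8}\subset\mathbb{R}[x,y]_8$ is the cone of finite sums of fourth powers of real binary quadratic forms and $(\Sigma^4_{2,8})^\star=\{L\in\mathbb{R}[x,y]_8:\langle L,q^4\rangle\ge0\ \forall q\in\mathbb{R}[x,y]_2\}$. With variables $a,b,c$, $q(a,b,c)=ax^2+bxy+cy^2$ and $\langle L,q(a,b,c)^4\rangle\in\mathbb{R}[a,b,c]_4$ is computed in $x,y$ treating $a,b,c$ as scalars. $U\subset\mathbb{R}[a,b,c]_4$ is the $9$-dimensional subspace $\{\langle L,q(a,b,c)^4\rangle: L\in\mathbb{R}[x,y]_8\}$ (equivalently the apolar orthogonal complement of the degree-4 part of the ideal $(b^2-ac)$); $\Sigma^2_{3,4}$ is the cone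 of nonnegative (equivalently, sums of squares) ternary quartics, and $\partial\Sigma^2_{3,4}$ its boundary. Under $L\mapsto\langle L,q(a,b,c)^4\rangle$, $(\Sigma^4_{2,8})^\star$ corresponds to $\Sigma^2_{3,4}\cap U$. *)

theory Defs
  imports "HOL-Analysis.Analysis" "HOL-Computational_Algebra.Polynomial"
begin

text \<open>A binary octic form L in R[x,y]_8 is encoded by its coefficient function:
  L i is the coefficient of x^i y^(8-i), for i = 0..8 (other values are ignored).\<close>

text \<open>Apolarity pairing restricted to R[x,y]_8 x R[x,y]_8: for monomials of equal
  degree 8, alpha <= beta componentwise forces alpha = beta, and the factor
  beta1! beta2! / (alpha1! alpha2!) equals 1.  Hence the pairing is the plain
  coordinate dot product of coefficient vectors.\<close>
definition apolar8 :: "(nat \<Rightarrow> real) \<Rightarrow> (nat \<Rightarrow> real) \<Rightarrow> real" where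
  "apolar8 L M = (\<Sum>i\<le>8. L i * M i * (fact i * fact (8 - i)) / (fact i * fact (8 - i)))"

text \<open>Coefficients of q(a,b,c)^4 where q = a x^2 + b x y + c y^2: the coefficient of
  x^i y^(8-i) equals the coefficient of x^i in (a x^2 + b x + c)^4 (dehomogenise y = 1).\<close>
definition qpow4 :: "real \<Rightarrow> real \<Rightarrow> real \<Rightarrow> nat \<Rightarrow> real" where
  "qpow4 a b c i = coeff ([:c, b, a:] ^ 4) i"

definition Fquart :: "(nat \<Rightarrow> real) \<Rightarrow> real \<times> real \<times> real \<Rightarrow> real" where
  "Fquart L v = (case v of (a, b, c) \<Rightarrow> apolar8 L (qpow4 a b c))"

definition in_dual_cone :: "(nat \<Rightarrow> real) \<Rightarrow> bool" where
  "in_dual_cone L \<longleftrightarrow> (\<forall>a b c. apolar8 L (qpow4 a b c) \<ge> 0)"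

definition proj_real_zeros :: "(real \<times> real \<times> real \<Rightarrow> real) \<Rightarrow> (real \<times> real \<times> real) set set" where
  "proj_real_zeros F = {{t *\<^sub>R v | t. True} | v. v \<noteq> 0 \<and> F v = 0}"

end

(* A triple (a, b, c) stands for the binary quadratic q = a x^2 + b xy + c y^2, and
   F(q) = <L, q^4> is a nonnegative quartic in q which is covariant under linear substitutions
   of (x, y).  Up to such a substitution and a scalar, a nonzero real q is x^2 + y^2, xy or x^2.

   Suppose F has four pairwise non-proportional real zeros.  If one of them is definite, move it
   to x^2 + y^2: minimality of F there forces F(q + s (x^2 + y^2)) = F(q), so F vanishes on the
   line joining it to any other zero.  If one is indefinite, move it to xy: then L_3 = L_4 = L_5 = 0,
   and either L_2 L_6 = 0, where two more zeros already force a line of zeros, or L_2, L_6 > 0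
   and the zeros are double roots of the discriminant of F(t, b, 1) in b, a nonnegative sextic
   in t that cannot have three double roots.  If all four zeros are squares, moving two of them
   to x^2 and y^2 forces F = 0.  A line of zeros yields infinitely many projective zeros. *)

theory Submission
  imports Defs
begin

lemmas power_expand = power2_eq_square power3_eq_cube power4_eq_xxxx

section \<open>Nonnegative univariate polynomials\<close>

lemma nonneg_poly_at_0:
  fixes p :: "real poly"
  assumes "\<And>t. t > 0 \<Longrightarrow> 0 \<le> poly p t"
  shows "0 \<le> poly p 0"
proof (rule tendsto_lowerbound)
  show "(poly p \<longlongrightarrow> poly p 0) (at_right 0)"
    by (rule tendsto_mono [OF at_le]) (auto intro: isCont_tendsto_compose poly_isCont)
  show "\<forall>\<^sub>F t in at_right 0. 0 \<le> poly p t"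
    by (rule eventually_at_rightI [of 0 1]) (use assms in auto)
qed simp

lemma nonneg_quartic_root_0_coeffs:
  fixes c1 c2 c3 c4 :: real
  assumes nonneg: "\<And>t. 0 \<le> c1*t + c2*t^2 + c3*t^3 + c4*t^4"
  shows "c1 = 0" and "0 \<le> c2" and "c2 = 0 \<Longrightarrow> c3 = 0"
proof -
  have at_0: "0 \<le> d" if multiple: "\<And>t. t > 0 \<Longrightarrow> 0 \<le> t^k * (d + e*t + f*t^2 + g*t^3)"
    for k :: nat and d e f g :: real
  proof -
    have "0 \<le> poly [:d, e, f, g:] t" if "t > 0" for t
    proof -
      have "0 \<le> d + e*t + f*t^2 + g*t^3"
        using multiple [OF that] zero_less_power [OF that, of k] by (auto simp: zero_le_mult_iff)
      then show ?thesis by (simp add: algebra_simps power2_eq_square power3_eq_cube)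
    qed
    from nonneg_poly_at_0 [OF this] show ?thesis by simp
  qed
  have "0 \<le> c1"
    by (rule at_0 [of 1 _ c2 c3 c4])
       (use nonneg in \<open>simp add: algebra_simps power_expand\<close>)
  moreover have "0 \<le> - c1"
  proof (rule at_0 [of 1 _ c2 "- c3" c4])
    fix t :: real
    show "0 \<le> t^1 * (- c1 + c2*t + (- c3)*t^2 + c4*t^3)"
      using nonneg [of "- t"] by (simp add: algebra_simps power_expand)
  qed
  ultimately show c1: "c1 = 0" by simp
  show "0 \<le> c2"
    by (rule at_0 [of 2 _ c3 c4 0])
       (use nonneg in \<open>simp add: c1 algebra_simps power_expand\<close>)
  assume c2: "c2 = 0"
  have "0 \<le> c3"
    by (rule at_0 [of 3 _ c4 0 0])
       (use nonneg in \<open>simp add: c1 c2 algebra_simps power_expand\<close>)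
  moreover have "0 \<le> - c3"
  proof (rule at_0 [of 3 _ c4 0 0])
    fix t :: real
    show "0 \<le> t^3 * (- c3 + c4*t + 0*t^2 + 0*t^3)"
      using nonneg [of "- t"] by (simp add: c1 c2 algebra_simps power_expand)
  qed
  ultimately show "c3 = 0" by simp
qed

lemma nonneg_quadratic_discrim:
  fixes A B C :: real
  assumes A: "A > 0" and nonneg: "\<And>b. 0 \<le> A*b^2 + B*b + C"
  shows "0 \<le> 4*A*C - B^2"
proof -
  have "0 \<le> A*(-B/(2*A))^2 + B*(-B/(2*A)) + C" by (rule nonneg)
  also have "\<dots> = (4*A*C - B^2) / (4*A)" using A by (simp add: field_simps power2_eq_square)
  finally show ?thesis using A by (simp add: zero_le_divide_iff)
qed

lemma nonneg_quadratic_root: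
  fixes A B C b :: real
  assumes A: "A > 0" and nonneg: "\<And>b. 0 \<le> A*b^2 + B*b + C" and root: "A*b^2 + B*b + C = 0"
  shows "4*A*C - B^2 = 0" and "b = -B/(2*A)"
proof -
  have "(2*A*b + B)^2 + (4*A*C - B^2) = 4*A*(A*b^2 + B*b + C)"
    by (simp add: algebra_simps power2_eq_square)
  with root have "(2*A*b + B)^2 + (4*A*C - B^2) = 0" by simp
  with nonneg_quadratic_discrim [OF A nonneg]
  have "(2*A*b + B)^2 = 0" and "4*A*C - B^2 = 0"
    by (simp_all add: add_nonneg_eq_0_iff)
  then show "4*A*C - B^2 = 0" and "b = -B/(2*A)"
    using A by (simp_all add: field_simps)
qed

lemma affine_nonneg_imp_const:
  fixes a b :: real
  assumes "\<And>t. 0 \<le> a + b*t"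
  shows "b = 0"
proof (rule ccontr)
  assume b: "b \<noteq> 0"
  have "0 \<le> a + b*((- a - 1)/b)" by (rule assms)
  also have "\<dots> = -1" using b by (simp add: field_simps)
  finally show False by simp
qed

lemma nonneg_poly_root_pderiv:
  fixes p :: "real poly"
  assumes "\<And>t. 0 \<le> poly p t" and "poly p a = 0"
  shows "poly (pderiv p) a = 0"
  by (rule DERIV_local_min [OF poly_DERIV, of 1]) (use assms in auto)

text \<open>Both roots are minima of the discriminant in \<open>b\<close>, a quartic in \<open>t\<close> whose derivative
  \<open>4 A (\<beta> + 4 \<alpha> t^3)\<close> has a single real zero.\<close>

lemma nonneg_quadratic_quartic_unique_root:
  fixes A B \<alpha> \<beta> \<gamma> :: real
  assumes A: "A > 0" and "\<beta> \<noteq> 0"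
    and nonneg: "\<And>t b. 0 \<le> A*b^2 + B*b + (\<gamma> + \<beta>*t + \<alpha>*t^4)"
    and root1: "A*b1^2 + B*b1 + (\<gamma> + \<beta>*t1 + \<alpha>*t1^4) = 0"
    and root2: "A*b2^2 + B*b2 + (\<gamma> + \<beta>*t2 + \<alpha>*t2^4) = 0"
  shows "t1 = t2 \<and> b1 = b2"
proof -
  define d where "d = [:4*A*\<gamma> - B^2, 4*A*\<beta>, 0, 0, 4*A*\<alpha>:]"
  have poly_d: "poly d t = 4*A*(\<gamma> + \<beta>*t + \<alpha>*t^4) - B^2" for t
    unfolding d_def by (simp add: algebra_simps power_expand)
  have pderiv_d: "poly (pderiv d) t = 4*A*\<beta> + 16*A*\<alpha>*t^3" for t
    unfolding d_def by (simp add: pderiv_pCons algebra_simps power2_eq_square power3_eq_cube)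
  have d_nonneg: "0 \<le> poly d t" for t
    using nonneg_quadratic_discrim [OF A nonneg, of t] poly_d [of t] by simp
  have "poly d t1 = 0" "b1 = -B/(2*A)"
    using nonneg_quadratic_root [OF A nonneg root1] poly_d [of t1] by simp_all
  moreover have "poly d t2 = 0" "b2 = -B/(2*A)"
    using nonneg_quadratic_root [OF A nonneg root2] poly_d [of t2] by simp_all
  ultimately have crit: "4*A*\<beta> + 16*A*\<alpha>*t1^3 = 0" "4*A*\<beta> + 16*A*\<alpha>*t2^3 = 0"
    using nonneg_poly_root_pderiv [OF d_nonneg] pderiv_d by metis+
  with A \<open>\<beta> \<noteq> 0\<close> have "16*A*\<alpha> \<noteq> 0" by auto
  moreover from crit have "(16*A*\<alpha>) * t1^3 = (16*A*\<alpha>) * t2^3" by linarith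
  ultimately have "t1^3 = t2^3" by simp
  then have "t1 = t2" by (metis odd_real_root_power_cancel odd_numeral)
  with \<open>b1 = -B/(2*A)\<close> \<open>b2 = -B/(2*A)\<close> show ?thesis by simp
qed

lemma double_root_imp_square_dvd:
  fixes p :: "real poly"
  assumes "poly p a = 0" and "poly (pderiv p) a = 0"
  shows "[:-a, 1:]^2 dvd p"
proof -
  obtain q where q: "p = [:-a, 1:] * q"
    using assms(1) poly_eq_0_iff_dvd by (metis dvdE)
  have "pderiv p = [:-a, 1:] * pderiv q + q"
    unfolding q pderiv_mult by (simp add: pderiv_pCons)
  then have "poly q a = 0" using assms(2) by simp
  then have "[:-a, 1:] dvd q" by (simp add: poly_eq_0_iff_dvd)
  then show ?thesis unfolding q power2_eq_square by (rule mult_dvd_mono [OF dvd_refl])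
qed

lemma double_root_of_factor:
  fixes p m q :: "real poly"
  assumes "p = m * q" and "poly m a \<noteq> 0" and "poly p a = 0" and "poly (pderiv p) a = 0"
  shows "poly q a = 0" and "poly (pderiv q) a = 0"
proof -
  show q: "poly q a = 0" using assms by simp
  have "pderiv p = m * pderiv q + q * pderiv m" unfolding assms(1) by (rule pderiv_mult)
  with assms(2,4) q show "poly (pderiv q) a = 0" by simp
qed

lemma sextic_with_three_double_roots:
  fixes p :: "real poly"
  assumes "p \<noteq> 0" and "degree p \<le> 6" and "t1 \<noteq> t2" "t1 \<noteq> t3" "t2 \<noteq> t3"
    and "\<And>t. t \<in> {t1, t2, t3} \<Longrightarrow> poly p t = 0 \<and> poly (pderiv p) t = 0"
  shows "\<exists>K. p = smult K (([:-t1, 1:] * [:-t2, 1:] * [:-t3, 1:])^2)"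
proof -
  obtain q1 where q1: "p = [:-t1, 1:]^2 * q1"
    using double_root_imp_square_dvd assms(6) by blast
  have "poly q1 t2 = 0" "poly (pderiv q1) t2 = 0"
    using double_root_of_factor [OF q1] assms(3,6) by auto
  then obtain q2 where q2: "q1 = [:-t2, 1:]^2 * q2"
    using double_root_imp_square_dvd by blast
  have p2: "p = ([:-t1, 1:]^2 * [:-t2, 1:]^2) * q2" using q1 q2 by (simp add: mult.assoc)
  have "poly q2 t3 = 0" "poly (pderiv q2) t3 = 0"
    using double_root_of_factor [OF p2] assms(4,5,6) by auto
  then obtain q3 where "q2 = [:-t3, 1:]^2 * q3"
    using double_root_imp_square_dvd by blast
  with p2 have p3: "p = ([:-t1, 1:] * [:-t2, 1:] * [:-t3, 1:])^2 * q3"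
    by (simp only: power_mult_distrib mult.assoc)
  with assms(1) have "q3 \<noteq> 0" by auto
  with p3 assms(2) have "degree q3 = 0"
    by (simp add: degree_mult_eq degree_power_eq)
  then obtain K where "q3 = [:K:]" by (metis degree_eq_zeroE)
  with p3 show ?thesis by auto
qed

section \<open>Lines of zeros\<close>

definition independent_pair :: "'a::real_vector \<Rightarrow> 'a \<Rightarrow> bool" where
  "independent_pair v w \<longleftrightarrow> v \<noteq> 0 \<and> (\<forall>t. w \<noteq> t *\<^sub>R v)"

lemma independent_pair_scaleR: "k \<noteq> 0 \<Longrightarrow> independent_pair v w \<Longrightarrow> independent_pair (k *\<^sub>R v) w"
  unfolding independent_pair_def by (metis scaleR_eq_0_iff scaleR_scaleR)

lemma independent_pair_linear_image:
  assumes "linear f" "inj f" "independent_pair v w"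
  shows "independent_pair (f v) (f w)"
  using assms unfolding independent_pair_def
  by (metis linear_0 linear_scale injD)

lemma independent_pair_if_lines_differ:
  assumes "v \<noteq> 0" "w \<noteq> 0" "{t *\<^sub>R v | t. True} \<noteq> {t *\<^sub>R w | t. True}"
  shows "independent_pair v w"
proof -
  have "w \<noteq> k *\<^sub>R v" for k
  proof
    assume w: "w = k *\<^sub>R v"
    with assms(2) have "k \<noteq> 0" by auto
    then have "t *\<^sub>R v = (t / k) *\<^sub>R w" for t by (simp add: w)
    then have "{t *\<^sub>R v | t. True} = {t *\<^sub>R w | t. True}"
      unfolding w by (metis scaleR_scaleR)
    with assms(3) show False ..
  qed
  with assms(1) show ?thesis unfolding independent_pair_def by blast
qed

definition vanishes_on_line :: "('a::real_vector \<Rightarrow> real) \<Rightarrow> bool" where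
  "vanishes_on_line F \<longleftrightarrow> (\<exists>v w. independent_pair v w \<and> (\<forall>s. F (w + s *\<^sub>R v) = 0))"

lemma vanishes_on_line_comp_linear:
  assumes "linear f" "inj f" "vanishes_on_line (F \<circ> f)"
  shows "vanishes_on_line F"
proof -
  obtain v w where vw: "independent_pair v w" and zero: "\<And>s. F (f (w + s *\<^sub>R v)) = 0"
    using assms(3) unfolding vanishes_on_line_def by auto
  have "F (f w + s *\<^sub>R f v) = 0" for s
    using zero [of s] by (simp add: linear_add [OF assms(1)] linear_scale [OF assms(1)])
  with independent_pair_linear_image [OF assms(1,2) vw] show ?thesis
    unfolding vanishes_on_line_def by blast
qed

lemma vanishes_on_line_infinite_zeros:
  assumes "vanishes_on_line F"
  shows "infinite (proj_real_zeros F)"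
proof
  assume fin: "finite (proj_real_zeros F)"
  obtain v w where "independent_pair v w" and zero: "\<And>s. F (w + s *\<^sub>R v) = 0"
    using assms unfolding vanishes_on_line_def by blast
  then have v: "v \<noteq> 0" and w: "\<And>t. w \<noteq> t *\<^sub>R v"
    unfolding independent_pair_def by auto
  define line where "line s = {t *\<^sub>R (w + s *\<^sub>R v) | t. True}" for s
  have "w + s *\<^sub>R v \<noteq> 0" for s
    using w [of "- s"] by (auto simp: algebra_simps eq_neg_iff_add_eq_0)
  then have "range line \<subseteq> proj_real_zeros F"
    unfolding line_def proj_real_zeros_def using zero by blast
  moreover have "inj line"
  proof (rule injI)
    fix r r' assume "line r = line r'"
    then have "w + r' *\<^sub>R v \<in> line r"
      unfolding line_def by (metis (mono_tags, lifting) mem_Collect_eq scaleR_one)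
    then obtain t where "w + r' *\<^sub>R v = t *\<^sub>R (w + r *\<^sub>R v)" unfolding line_def by blast
    then have e: "(1 - t) *\<^sub>R w = (t*r - r') *\<^sub>R v" by (simp add: algebra_simps)
    show "r = r'"
    proof (cases "t = 1")
      case True
      with e v show ?thesis by (auto simp: algebra_simps)
    next
      case False
      then have "w = (1 / (1 - t)) *\<^sub>R ((1 - t) *\<^sub>R w)" by simp
      also have "\<dots> = ((t*r - r') / (1 - t)) *\<^sub>R v" unfolding e by simp
      finally show ?thesis using w by blast
    qed
  qed
  then have "infinite (range line)"
    using finite_imageD infinite_UNIV_char_0 by blast
  ultimately show False using fin finite_subset by blast
qed

section \<open>The quartic and its covariance\<close>

definition quartic :: "(nat \<Rightarrow> real) \<Rightarrow> real \<Rightarrow> real \<Rightarrow> real \<Rightarrow> real" where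
  "quartic L a b c = L 0 * c^4 + L 1 * (4*b*c^3) + L 2 * (6*b^2*c^2 + 4*a*c^3)
    + L 3 * (4*b^3*c + 12*a*b*c^2) + L 4 * (b^4 + 12*a*b^2*c + 6*a^2*c^2)
    + L 5 * (4*a*b^3 + 12*a^2*b*c) + L 6 * (6*a^2*b^2 + 4*a^3*c) + L 7 * (4*a^3*b) + L 8 * a^4"

definition apolar_poly :: "(nat \<Rightarrow> real) \<Rightarrow> real poly \<Rightarrow> real" where
  "apolar_poly L P = (\<Sum>i\<le>8. L i * coeff P i)"

lemma apolar_poly_add: "apolar_poly L (P + Q) = apolar_poly L P + apolar_poly L Q"
  by (simp add: apolar_poly_def algebra_simps sum.distrib)

lemma apolar_poly_smult: "apolar_poly L (smult k P) = k * apolar_poly L P"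
  by (simp add: apolar_poly_def sum_distrib_left algebra_simps)

lemma apolar_poly_quad_power4: "apolar_poly L ([:c, b, a:]^4) = quartic L a b c"
proof -
  have power4: "[:c, b, a:]^4 = [:c^4, 4*b*c^3, 6*b^2*c^2 + 4*a*c^3, 4*b^3*c + 12*a*b*c^2,
      b^4 + 12*a*b^2*c + 6*a^2*c^2, 4*a*b^3 + 12*a^2*b*c, 6*a^2*b^2 + 4*a^3*c, 4*a^3*b, a^4:]"
    by (simp add: power_numeral_reduce power2_eq_square algebra_simps numeral_eq_Suc)
  have sum9: "(\<Sum>i\<le>8::nat. f i) = f 0 + f 1 + f 2 + f 3 + f 4 + f 5 + f 6 + f 7 + (f 8 :: real)" for f
    by (simp add: numeral_eq_Suc atMost_Suc add.commute add.left_commute)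
  show ?thesis
    unfolding apolar_poly_def power4 sum9 quartic_def by (simp add: numeral_eq_Suc)
qed

lemma Fquart_eq_quartic: "Fquart L (a, b, c) = quartic L a b c"
proof -
  have "apolar8 L M = (\<Sum>i\<le>8. L i * M i)" for M
    unfolding apolar8_def by (intro sum.cong refl) simp
  then show ?thesis
    by (simp add: Fquart_def qpow4_def apolar_poly_quad_power4 [symmetric] apolar_poly_def)
qed

lemma quartic_homogeneous: "quartic L (k*a) (k*b) (k*c) = k^4 * quartic L a b c"
  unfolding quartic_def by (simp add: power_expand algebra_simps)

lemma Fquart_scaleR: "Fquart L (k *\<^sub>R v) = k^4 * Fquart L v"
  by (cases v) (simp add: Fquart_eq_quartic quartic_homogeneous)

lemma in_dual_cone_iff_Fquart_nonneg: "in_dual_cone L \<longleftrightarrow> (\<forall>v. 0 \<le> Fquart L v)"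
  unfolding in_dual_cone_def Fquart_def by auto

lemma quartic_nonneg: "in_dual_cone L \<Longrightarrow> 0 \<le> quartic L a b c"
  by (metis in_dual_cone_iff_Fquart_nonneg Fquart_eq_quartic)

lemma quartic_curve_through_root:
  assumes "in_dual_cone L"
    and "\<And>t. quartic L (a t) (b t) (c t) = c0 + c1*t + c2*t^2 + c3*t^3 + c4*t^4" and "c0 = 0"
  shows "c1 = 0" and "0 \<le> c2" and "c2 = 0 \<Longrightarrow> c3 = 0"
proof -
  have "0 \<le> c1*t + c2*t^2 + c3*t^3 + c4*t^4" for t
    using quartic_nonneg [OF assms(1), of "a t" "b t" "c t"] assms(2,3) by simp
  then show "c1 = 0" and "0 \<le> c2" and "c2 = 0 \<Longrightarrow> c3 = 0"
    using nonneg_quartic_root_0_coeffs by blast+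
qed

text \<open>\<open>pullback L U W\<close> is \<open>L\<close> composed with the substitution \<open>x \<mapsto> U, y \<mapsto> W\<close> of binary
  forms, dehomogenised at \<open>y = 1\<close>. For \<open>U = [:u0, u1:]\<close> and \<open>W = [:w0, w1:]\<close>, \<open>subst_quad\<close> maps
  \<open>(x, y, z)\<close> to the coefficients of \<open>x U^2 + y U W + z W^2\<close>; \<open>subst_quad_inv\<close> inverts it when
  \<open>u1 w0 - u0 w1 \<noteq> 0\<close>.\<close>

definition pullback :: "(nat \<Rightarrow> real) \<Rightarrow> real poly \<Rightarrow> real poly \<Rightarrow> nat \<Rightarrow> real" where
  "pullback L U W = (\<lambda>m. apolar_poly L (U^m * W^(8 - m)))"

lemma quartic_pullback:
  "quartic (pullback L U W) x y z =
    apolar_poly L ((smult x (U^2) + smult y (U*W) + smult z (W^2))^4)"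
proof -
  have expand: "(smult x (U^2) + smult y (U*W) + smult z (W^2))^4 =
      smult (z^4) (W^8) + smult (4*y*z^3) (U*W^7) + smult (6*y^2*z^2 + 4*x*z^3) (U^2*W^6)
    + smult (4*y^3*z + 12*x*y*z^2) (U^3*W^5) + smult (y^4 + 12*x*y^2*z + 6*x^2*z^2) (U^4*W^4)
    + smult (4*x*y^3 + 12*x^2*y*z) (U^5*W^3) + smult (6*x^2*y^2 + 4*x^3*z) (U^6*W^2)
    + smult (4*x^3*y) (U^7*W) + smult (x^4) (U^8)"
    by (rule poly_eq_poly_eq_iff [THEN iffD1]) (simp add: fun_eq_iff, algebra)
  show ?thesis
    unfolding expand
    by (simp add: apolar_poly_add apolar_poly_smult pullback_def quartic_def mult_ac)
qed

definition subst_quad ::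
    "real \<Rightarrow> real \<Rightarrow> real \<Rightarrow> real \<Rightarrow> real \<times> real \<times> real \<Rightarrow> real \<times> real \<times> real" where
  "subst_quad u0 u1 w0 w1 = (\<lambda>(x, y, z). (x*u1^2 + y*u1*w1 + z*w1^2,
     2*x*u0*u1 + y*(u0*w1 + u1*w0) + 2*z*w0*w1, x*u0^2 + y*u0*w0 + z*w0^2))"

definition subst_quad_inv ::
    "real \<Rightarrow> real \<Rightarrow> real \<Rightarrow> real \<Rightarrow> real \<times> real \<times> real \<Rightarrow> real \<times> real \<times> real" where
  "subst_quad_inv u0 u1 w0 w1 = (\<lambda>(a, b, c). ((a*w0^2 - b*w0*w1 + c*w1^2)/(u1*w0 - u0*w1)^2,
     (-2*a*u0*w0 + b*(u1*w0 + u0*w1) - 2*c*u1*w1)/(u1*w0 - u0*w1)^2,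
     (a*u0^2 - b*u0*u1 + c*u1^2)/(u1*w0 - u0*w1)^2))"

lemma Fquart_pullback:
  "Fquart (pullback L [:u0, u1:] [:w0, w1:]) = Fquart L \<circ> subst_quad u0 u1 w0 w1"
proof
  fix v :: "real \<times> real \<times> real"
  obtain x y z where v: "v = (x, y, z)" by (metis prod_cases3)
  obtain a b c where abc: "subst_quad u0 u1 w0 w1 (x, y, z) = (a, b, c)" by (metis prod_cases3)
  have q: "[:c, b, a:] =
      smult x ([:u0, u1:]^2) + smult y ([:u0, u1:] * [:w0, w1:]) + smult z ([:w0, w1:]^2)"
    using abc by (simp add: subst_quad_def power2_eq_square algebra_simps)
  show "Fquart (pullback L [:u0, u1:] [:w0, w1:]) v = (Fquart L \<circ> subst_quad u0 u1 w0 w1) v"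
    unfolding v comp_apply abc Fquart_eq_quartic quartic_pullback q [symmetric]
      apolar_poly_quad_power4 ..
qed

lemma linear_subst_quad: "linear (subst_quad u0 u1 w0 w1)"
  by (rule linearI) (auto simp: subst_quad_def algebra_simps)

lemma linear_subst_quad_inv: "linear (subst_quad_inv u0 u1 w0 w1)"
  by (rule linearI) (auto simp: subst_quad_inv_def add_divide_distrib [symmetric] algebra_simps)

context
  fixes u0 u1 w0 w1 :: real
  assumes det: "u1*w0 - u0*w1 \<noteq> 0"
begin

lemma subst_quad_inv_inverse: "subst_quad u0 u1 w0 w1 (subst_quad_inv u0 u1 w0 w1 v) = v"
proof -
  obtain a b c where v: "v = (a, b, c)" by (metis prod_cases3)
  have "(u1*w0 - u0*w1)^2 \<noteq> 0" using det by simp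
  then show ?thesis unfolding v subst_quad_def subst_quad_inv_def by (simp add: field_simps) algebra
qed

lemma subst_quad_inverse: "subst_quad_inv u0 u1 w0 w1 (subst_quad u0 u1 w0 w1 v) = v"
proof -
  obtain a b c where v: "v = (a, b, c)" by (metis prod_cases3)
  have "(u1*w0 - u0*w1)^2 \<noteq> 0" using det by simp
  then show ?thesis unfolding v subst_quad_def subst_quad_inv_def by (simp add: field_simps) algebra
qed

lemma inj_subst_quad: "inj (subst_quad u0 u1 w0 w1)"
  by (rule inj_on_inverseI [where g = "subst_quad_inv u0 u1 w0 w1"]) (rule subst_quad_inverse)

lemma inj_subst_quad_inv: "inj (subst_quad_inv u0 u1 w0 w1)"
  by (rule inj_on_inverseI [where g = "subst_quad u0 u1 w0 w1"]) (rule subst_quad_inv_inverse)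

lemma vanishes_on_line_pullback:
  "vanishes_on_line (Fquart (pullback L [:u0, u1:] [:w0, w1:])) \<Longrightarrow> vanishes_on_line (Fquart L)"
  unfolding Fquart_pullback
  by (rule vanishes_on_line_comp_linear [OF linear_subst_quad inj_subst_quad])

lemma Fquart_pullback_subst_quad_inv:
  "Fquart (pullback L [:u0, u1:] [:w0, w1:]) (subst_quad_inv u0 u1 w0 w1 z) = Fquart L z"
  by (simp add: Fquart_pullback subst_quad_inv_inverse)

lemma independent_pair_subst_quad_inv:
  "independent_pair z z' \<Longrightarrow>
    independent_pair (subst_quad_inv u0 u1 w0 w1 z) (subst_quad_inv u0 u1 w0 w1 z')"
  by (rule independent_pair_linear_image [OF linear_subst_quad_inv inj_subst_quad_inv])

end

lemma in_dual_cone_pullback: "in_dual_cone L \<Longrightarrow> in_dual_cone (pullback L [:u0, u1:] [:w0, w1:])"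
  by (metis in_dual_cone_iff_Fquart_nonneg Fquart_pullback comp_apply)

section \<open>Quartics vanishing at a normal form\<close>

lemma quartic_root_101_coeffs:
  assumes L: "in_dual_cone L" and root: "quartic L 1 0 1 = 0"
  shows "L 2 = - L 0" "L 4 = L 0" "L 6 = - L 0" "L 8 = L 0" "L 3 = - L 1" "L 5 = L 1" "L 7 = - L 1"
proof -
  let ?F0 = "quartic L 1 0 1"
  have "quartic L (1 + t) 0 1 = ?F0 + (4*L 2 + 12*L 4 + 12*L 6 + 4*L 8)*t
      + (6*L 4 + 12*L 6 + 6*L 8)*t^2 + (4*L 6 + 4*L 8)*t^3 + L 8*t^4" for t
    unfolding quartic_def by (simp add: power_expand algebra_simps)
  note dir1 = quartic_curve_through_root [OF L this root]
  have "quartic L 1 t 1 = ?F0 + (4*L 1 + 12*L 3 + 12*L 5 + 4*L 7)*t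
      + (6*L 2 + 12*L 4 + 6*L 6)*t^2 + (4*L 3 + 4*L 5)*t^3 + L 4*t^4" for t
    unfolding quartic_def by (simp add: power_expand algebra_simps)
  note dir2 = quartic_curve_through_root [OF L this root]
  have "quartic L 1 0 (1 + t) = ?F0 + (4*L 0 + 12*L 2 + 12*L 4 + 4*L 6)*t
      + (6*L 0 + 12*L 2 + 6*L 4)*t^2 + (4*L 0 + 4*L 2)*t^3 + L 0*t^4" for t
    unfolding quartic_def by (simp add: power_expand algebra_simps)
  note dir3 = quartic_curve_through_root [OF L this root]
  have "quartic L (1 + t) 0 (1 - t) = ?F0 + (- 4*L 0 - 8*L 2 + 8*L 6 + 4*L 8)*t
      + (6*L 0 - 12*L 4 + 6*L 8)*t^2 + (- 4*L 0 + 8*L 2 - 8*L 6 + 4*L 8)*t^3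
      + (L 0 - 4*L 2 + 6*L 4 - 4*L 6 + L 8)*t^4" for t
    unfolding quartic_def by (simp add: power_expand algebra_simps)
  note dir4 = quartic_curve_through_root [OF L this root]
  have "quartic L (1 + t) t (1 - t) = ?F0
      + (- 4*L 0 + 4*L 1 - 8*L 2 + 12*L 3 + 12*L 5 + 8*L 6 + 4*L 7 + 4*L 8)*t
      + (6*L 0 - 12*L 1 + 6*L 2 - 12*L 3 + 12*L 5 + 6*L 6 + 12*L 7 + 6*L 8)*t^2
      + (- 4*L 0 + 12*L 1 - 4*L 2 - 8*L 3 - 8*L 5 + 4*L 6 + 12*L 7 + 4*L 8)*t^3
      + (L 0 - 4*L 1 + 2*L 2 + 8*L 3 - 5*L 4 - 8*L 5 + 2*L 6 + 4*L 7 + L 8)*t^4" for t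
    unfolding quartic_def by (simp add: power_expand algebra_simps)
  note dir5 = quartic_curve_through_root [OF L this root]
  have "quartic L (1 + t) (- t) (1 - t) = ?F0
      + (- 4*L 0 - 4*L 1 - 8*L 2 - 12*L 3 - 12*L 5 + 8*L 6 - 4*L 7 + 4*L 8)*t
      + (6*L 0 + 12*L 1 + 6*L 2 + 12*L 3 - 12*L 5 + 6*L 6 - 12*L 7 + 6*L 8)*t^2
      + (- 4*L 0 - 12*L 1 - 4*L 2 + 8*L 3 + 8*L 5 + 4*L 6 - 12*L 7 + 4*L 8)*t^3
      + (L 0 + 4*L 1 + 2*L 2 - 8*L 3 - 5*L 4 + 8*L 5 + 2*L 6 - 4*L 7 + L 8)*t^4" for t
    unfolding quartic_def by (simp add: power_expand algebra_simps)
  note dir6 = quartic_curve_through_root [OF L this root]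
  have "L 0 + 4*L 2 + 6*L 4 + 4*L 6 + L 8 = 0" using root by (simp add: quartic_def)
  with dir1(1) dir2(1,2) dir3(1) dir4(2) dir5(2) dir6(2) dir1(3) dir2(3)
  show "L 2 = - L 0" "L 4 = L 0" "L 6 = - L 0" "L 8 = L 0" "L 3 = - L 1" "L 5 = L 1" "L 7 = - L 1"
    by linarith+
qed

lemma quartic_shift_invariant_if_root_101:
  assumes "in_dual_cone L" and "quartic L 1 0 1 = 0"
  shows "quartic L (a + s) b (c + s) = quartic L a b c"
  using quartic_root_101_coeffs [OF assms] unfolding quartic_def
  by (simp add: power_expand algebra_simps)

lemma quartic_eq_0_if_roots_100_001:
  assumes L: "in_dual_cone L" and root1: "quartic L 1 0 0 = 0" and root2: "quartic L 0 0 1 = 0"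
  shows "quartic L a b c = 0"
proof -
  have "quartic L 1 t 0 = quartic L 1 0 0 + (4*L 7)*t + (6*L 6)*t^2 + (4*L 5)*t^3 + L 4*t^4" for t
    unfolding quartic_def by (simp add: power_expand algebra_simps)
  note dir1 = quartic_curve_through_root [OF L this root1]
  have "quartic L 1 0 t = quartic L 1 0 0 + (4*L 6)*t + (6*L 4)*t^2 + (4*L 2)*t^3 + L 0*t^4" for t
    unfolding quartic_def by (simp add: power_expand algebra_simps)
  note dir2 = quartic_curve_through_root [OF L this root1]
  have "quartic L 0 t 1 = quartic L 0 0 1 + (4*L 1)*t + (6*L 2)*t^2 + (4*L 3)*t^3 + L 4*t^4" for t
    unfolding quartic_def by (simp add: power_expand algebra_simps)
  note dir3 = quartic_curve_through_root [OF L this root2]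
  have "quartic L t 0 1 = quartic L 0 0 1 + (4*L 2)*t + (6*L 4)*t^2 + (4*L 6)*t^3 + L 8*t^4" for t
    unfolding quartic_def by (simp add: power_expand algebra_simps)
  note dir4 = quartic_curve_through_root [OF L this root2]
  have L_0: "L 0 = 0" "L 1 = 0" "L 2 = 0" "L 6 = 0" "L 7 = 0" "L 8 = 0"
    using root1 root2 dir1(1) dir2(1) dir3(1) dir4(1) by (simp_all add: quartic_def)
  have "0 \<le> 6*L 4 + 12*L 5*y" for y
  proof -
    have "quartic L 1 (y*t) t = 0 + 0*t + (6*L 4 + 12*L 5*y)*t^2
        + (4*L 5*y^3 + 12*L 4*y^2 + 12*L 3*y)*t^3 + (L 4*y^4 + 4*L 3*y^3)*t^4" for t
      unfolding quartic_def L_0 by (simp add: power_expand algebra_simps)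
    from quartic_curve_through_root(2) [OF L this] show ?thesis by simp
  qed
  then have L5: "L 5 = 0" using affine_nonneg_imp_const [of "6*L 4" "12*L 5"] by simp
  have "0 \<le> 6*L 4 + 12*L 3*y" for y
  proof -
    have "quartic L t (y*t) 1 = 0 + 0*t + (6*L 4 + 12*L 3*y)*t^2
        + (4*L 3*y^3 + 12*L 4*y^2 + 12*L 5*y)*t^3 + (L 4*y^4 + 4*L 5*y^3)*t^4" for t
      unfolding quartic_def L_0 by (simp add: power_expand algebra_simps)
    from quartic_curve_through_root(2) [OF L this] show ?thesis by simp
  qed
  then have L3: "L 3 = 0" using affine_nonneg_imp_const [of "6*L 4" "12*L 3"] by simp
  have "0 \<le> quartic L 0 1 0" and "0 \<le> quartic L 1 2 (-1)"
    using quartic_nonneg [OF L] by auto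
  then have "L 4 = 0" unfolding quartic_def L_0 L3 L5 by simp
  then show ?thesis unfolding quartic_def L_0 L3 L5 by simp
qed

lemma quartic_root_010_coeffs:
  assumes L: "in_dual_cone L" and root: "quartic L 0 1 0 = 0"
  shows "L 3 = 0" and "L 4 = 0" and "L 5 = 0" and "0 \<le> L 2" and "0 \<le> L 6"
proof -
  show L4: "L 4 = 0" using root by (simp add: quartic_def)
  have "quartic L t 1 0 = quartic L 0 1 0 + (4*L 5)*t + (6*L 6)*t^2 + (4*L 7)*t^3 + L 8*t^4" for t
    unfolding quartic_def by (simp add: power_expand algebra_simps)
  from quartic_curve_through_root [OF L this root] show "L 5 = 0" "0 \<le> L 6" by auto
  have "quartic L 0 1 t = quartic L 0 1 0 + (4*L 3)*t + (6*L 2)*t^2 + (4*L 1)*t^3 + L 0*t^4" for t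
    unfolding quartic_def by (simp add: power_expand algebra_simps)
  from quartic_curve_through_root [OF L this root] show "L 3 = 0" "0 \<le> L 2" by auto
qed

lemma vanishes_on_line_quartic:
  assumes "independent_pair (x1, y1, z1) (x2, y2, z2)"
    and "\<And>s. quartic L (x2 + s*x1) (y2 + s*y1) (z2 + s*z1) = 0"
  shows "vanishes_on_line (Fquart L)"
  unfolding vanishes_on_line_def using assms by (auto simp: Fquart_eq_quartic intro!: exI)

lemma independent_pair_010:
  fixes a b c :: real
  assumes "independent_pair (0, 1, 0) (a, b, c)"
  shows "a \<noteq> 0 \<or> c \<noteq> 0"
proof (rule ccontr)
  assume "\<not> (a \<noteq> 0 \<or> c \<noteq> 0)"
  then have "(a, b, c) = b *\<^sub>R (0, 1, 0)" by simp
  with assms show False unfolding independent_pair_def by blast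
qed

lemma quartic_dehomogenize: "c \<noteq> 0 \<Longrightarrow> quartic L a b c = c^4 * quartic L (a/c) (b/c) 1"
  using quartic_homogeneous [of L c "a/c" "b/c" 1] by simp

lemma independent_pair_dehomogenize:
  fixes a b c a' b' c' :: real
  assumes "independent_pair (a, b, c) (a', b', c')" and "c \<noteq> 0" and "c' \<noteq> 0"
  shows "(a/c, b/c) \<noteq> (a'/c', b'/c')"
proof
  assume "(a/c, b/c) = (a'/c', b'/c')"
  with assms(2,3) have "(a', b', c') = (c'/c) *\<^sub>R (a, b, c)" by (auto simp: field_simps)
  with assms(1) show False unfolding independent_pair_def by blast
qed

text \<open>The hypotheses compare the coefficients of \<open>fibre_discrim L\<close> (below) with those of
  \<open>K (t^3 - e1 t^2 + e2 t - e3)^2\<close>, where \<open>p = L 2\<close> and \<open>r = L 6\<close>. Eliminating \<open>L1\<close> and \<open>L7\<close> via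
  \<open>(4 L1 L7)^2 = 4 (2 r L1^2) (2 p L7^2)\<close> leaves an identity that factors with a positive factor.\<close>

lemma cubic_square_coeff_relation:
  fixes p r K e1 e2 e3 L0 L1 L7 L8 :: real
  assumes p: "p > 0" and r: "r > 0"
    and h1: "K = 3*r*L8 - 2*L7^2"
    and h2: "-2*K*e1 = 12*r^2"
    and h3: "K*(e1^2 + 2*e2) = 3*p*L8"
    and h4: "-2*K*(e3 + e1*e2) = 24*p*r - 4*L1*L7"
    and h5: "K*(e2^2 + 2*e1*e3) = 3*L0*r"
    and h6: "-2*K*e2*e3 = 12*p^2"
    and h7: "K*e3^2 = 3*L0*p - 2*L1^2"
  shows "2*r*e2 = p"
proof -
  have K: "K \<noteq> 0" using h2 r by auto
  have e2: "e2 \<noteq> 0" using h6 p by auto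
  have L1_sq: "2*r*L1^2 = p*K*(e2^2 + 2*e1*e3) - r*K*e3^2" using h5 h7 by algebra
  have L7_sq: "2*p*L7^2 = r*K*(e1^2 + 2*e2) - p*K" using h1 h3 by algebra
  have L1_L7: "4*L1*L7 = 24*p*r + 2*K*(e3 + e1*e2)" using h4 by algebra
  have "p*r*(4*L1*L7)^2 = 4*(2*r*L1^2)*(2*p*L7^2)" by algebra
  then have eliminated: "p*r*(24*p*r + 2*K*(e3 + e1*e2))^2
      = 4*(p*K*(e2^2 + 2*e1*e3) - r*K*e3^2)*(r*K*(e1^2 + 2*e2) - p*K)" (is "?l = ?r")
    unfolding L1_sq L7_sq L1_L7 .
  have e1: "e1 = -6*r^2/K" using h2 K by (simp add: field_simps)
  have e3: "e3 = -6*p^2/(K*e2)" using h6 K e2 by (simp add: field_simps)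
  have "p^5 * (?l - ?r) = -4*K^2*e2^2*(2*r*e2 - p)*(r^3*e3^2 + p^3)^2"
    unfolding e1 e3 using K e2 by (simp add: field_simps) algebra
  with eliminated have "-4*K^2*e2^2*(2*r*e2 - p)*(r^3*e3^2 + p^3)^2 = 0" by simp
  moreover have "r^3*e3^2 + p^3 > 0" using p r by (simp add: add_nonneg_pos)
  ultimately show ?thesis using K e2 by simp
qed

lemma cubic_square_coeff_two_roots:
  fixes p r K e1 e2 e3 t1 t2 :: real
  assumes p: "p > 0" and r: "r > 0" and K: "K \<noteq> 0"
    and h2: "K*e1 = -6*r^2" and h6: "K*e2*e3 = -6*p^2" and relation: "2*r*e2 = p"
    and "t1 \<noteq> t2"
    and root1: "t1^3 - e1*t1^2 + e2*t1 - e3 = 0" and root2: "t2^3 - e1*t2^2 + e2*t2 - e3 = 0"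
  shows False
proof -
  have "2*r*(K*e2*e3) = 2*r*(-6*p^2)" using h6 by simp
  then have "p*(K*e3) = p*(-12*p*r)" using relation by algebra
  with p have e3: "K*e3 = -12*p*r" by (subst (asm) mult_left_cancel) auto
  have root: "K*t*(2*r*t^2 + p) + 12*r^2*(r*t^2 + 2*p) = 0"
    if "t^3 - e1*t^2 + e2*t - e3 = 0" for t
  proof -
    have "2*r*K*(t^3 - e1*t^2 + e2*t - e3) = 0" using that by simp
    then show ?thesis using h2 e3 relation by algebra
  qed
  have "K*((t1 - t2)*(2*r^2*t1^2*t2^2 + p*r*(4*t1^2 + 3*t1*t2 + 4*t2^2) + 2*p^2)) = 0"
    using root [OF root1] root [OF root2] by algebra
  with K \<open>t1 \<noteq> t2\<close> have "2*r^2*t1^2*t2^2 + p*r*(4*t1^2 + 3*t1*t2 + 4*t2^2) + 2*p^2 = 0"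
    by simp
  moreover have "4*t1^2 + 3*t1*t2 + 4*t2^2 = (3/2)*(t1 + t2)^2 + (5/2)*t1^2 + (5/2)*t2^2"
    by algebra
  then have "0 \<le> 4*t1^2 + 3*t1*t2 + 4*t2^2" by simp
  with p r have "0 < 2*r^2*t1^2*t2^2 + p*r*(4*t1^2 + 3*t1*t2 + 4*t2^2) + 2*p^2"
    by (simp add: add_nonneg_pos)
  ultimately show False by simp
qed

text \<open>If \<open>L 3 = L 4 = L 5 = 0\<close> then \<open>quartic L t b 1 = A b^2 + B b + C\<close> with \<open>A, B, C\<close>
  depending on \<open>t\<close>, and \<open>fibre_discrim L\<close> is \<open>(4 A C - B^2) / 8\<close>.\<close>

definition fibre_discrim :: "(nat \<Rightarrow> real) \<Rightarrow> real poly" where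
  "fibre_discrim L = [:3*L 2*L 0 - 2*(L 1)^2, 12*(L 2)^2, 3*L 6*L 0, 24*L 2*L 6 - 4*L 1*L 7,
      3*L 2*L 8, 12*(L 6)^2, 3*L 6*L 8 - 2*(L 7)^2:]"

lemma fibre_discrim_root_010:
  assumes L: "in_dual_cone L" and root: "quartic L 0 1 0 = 0" and "L 2 > 0"
  shows "0 \<le> poly (fibre_discrim L) t"
    and "quartic L t b 1 = 0 \<Longrightarrow>
      poly (fibre_discrim L) t = 0 \<and> b = - (L 1 + L 7*t^3) / (3*(L 2 + L 6*t^2))"
proof -
  note coeffs = quartic_root_010_coeffs [OF L root]
  define A where "A = 6*(L 2 + L 6*t^2)"
  define B where "B = 4*(L 1 + L 7*t^3)"
  define C where "C = L 0 + 4*L 2*t + 4*L 6*t^3 + L 8*t^4"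
  have quadratic: "quartic L t b 1 = A*b^2 + B*b + C" for b
    unfolding quartic_def A_def B_def C_def coeffs(1-3)
    by (simp add: power_expand algebra_simps)
  have A: "A > 0" unfolding A_def using \<open>L 2 > 0\<close> coeffs(5) by (simp add: add_pos_nonneg)
  have nonneg: "0 \<le> A*b^2 + B*b + C" for b
    using quartic_nonneg [OF L, of t b 1] quadratic by simp
  have discrim: "8 * poly (fibre_discrim L) t = 4*A*C - B^2"
    unfolding fibre_discrim_def A_def B_def C_def
    by (simp add: power_expand algebra_simps)
  show "0 \<le> poly (fibre_discrim L) t"
    using nonneg_quadratic_discrim [OF A nonneg] discrim by simp
  assume "quartic L t b 1 = 0"
  with quadratic have "A*b^2 + B*b + C = 0" by simp
  from nonneg_quadratic_root [OF A nonneg this] discrim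
  have "poly (fibre_discrim L) t = 0" and "b = -B/(2*A)" by simp_all
  moreover have "-B/(2*A) = - (L 1 + L 7*t^3) / (3*(L 2 + L 6*t^2))"
    using A unfolding A_def B_def by (simp add: field_simps)
  ultimately show "poly (fibre_discrim L) t = 0 \<and> b = - (L 1 + L 7*t^3) / (3*(L 2 + L 6*t^2))"
    by simp
qed

lemma fibre_discrim_not_cubic_square:
  assumes p: "L 2 > 0" and r: "L 6 > 0"
    and square: "fibre_discrim L = smult K ([:-e3, e2, -e1, 1:]^2)"
    and "t1 \<noteq> t2" and "poly [:-e3, e2, -e1, 1:] t1 = 0" and "poly [:-e3, e2, -e1, 1:] t2 = 0"
  shows False
proof -
  have "[:-e3, e2, -e1, 1:]^2 =
      [:e3^2, -2*e2*e3, e2^2 + 2*e1*e3, -2*e3 - 2*e1*e2, e1^2 + 2*e2, -2*e1, 1:]"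
    by (simp add: power2_eq_square algebra_simps)
  with square have eqs: "3*L 2*L 0 - 2*(L 1)^2 = K*e3^2" "12*(L 2)^2 = K*(-2*e2*e3)"
     "3*L 6*L 0 = K*(e2^2 + 2*e1*e3)" "24*L 2*L 6 - 4*L 1*L 7 = K*(-2*e3 - 2*e1*e2)"
     "3*L 2*L 8 = K*(e1^2 + 2*e2)" "12*(L 6)^2 = K*(-2*e1)" "3*L 6*L 8 - 2*(L 7)^2 = K"
    unfolding fibre_discrim_def by simp_all
  have K: "K \<noteq> 0" using eqs(6) r by auto
  have relation: "2*L 6*e2 = L 2"
    by (rule cubic_square_coeff_relation [of "L 2" "L 6" K "L 8" "L 7" e1 e2 e3 "L 1" "L 0"])
       (use p r eqs in \<open>simp_all add: algebra_simps\<close>)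
  have roots: "t1^3 - e1*t1^2 + e2*t1 - e3 = 0" "t2^3 - e1*t2^2 + e2*t2 - e3 = 0"
    using assms(5,6) by (simp_all add: algebra_simps power2_eq_square power3_eq_cube)
  show False
    by (rule cubic_square_coeff_two_roots [OF p r K _ _ relation assms(4) roots])
       (use eqs(2,6) in \<open>simp_all add: algebra_simps\<close>)
qed

lemma quartic_root_010_not_three_affine_roots:
  assumes L: "in_dual_cone L" and root: "quartic L 0 1 0 = 0" and p: "L 2 > 0" and r: "L 6 > 0"
    and roots: "quartic L t1 b1 1 = 0" "quartic L t2 b2 1 = 0" "quartic L t3 b3 1 = 0"
    and distinct: "(t1, b1) \<noteq> (t2, b2)" "(t1, b1) \<noteq> (t3, b3)" "(t2, b2) \<noteq> (t3, b3)"
  shows False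
proof -
  note fibre = fibre_discrim_root_010 [OF L root p]
  have ts: "t1 \<noteq> t2" "t1 \<noteq> t3" "t2 \<noteq> t3"
    using fibre(2) [OF roots(1)] fibre(2) [OF roots(2)] fibre(2) [OF roots(3)] distinct by auto
  have "fibre_discrim L \<noteq> 0"
  proof
    assume "fibre_discrim L = 0"
    then have "coeff (fibre_discrim L) 1 = 0" by simp
    with p show False unfolding fibre_discrim_def by simp
  qed
  moreover have "degree (fibre_discrim L) \<le> 6"
    by (rule degree_le) (auto simp: fibre_discrim_def coeff_pCons split: nat.split)
  moreover have "poly (fibre_discrim L) t = 0 \<and> poly (pderiv (fibre_discrim L)) t = 0"
    if "t \<in> {t1, t2, t3}" for t
    using that fibre(2) [OF roots(1)] fibre(2) [OF roots(2)] fibre(2) [OF roots(3)]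
      nonneg_poly_root_pderiv [OF fibre(1)] by auto
  ultimately obtain K
    where K: "fibre_discrim L = smult K (([:-t1, 1:] * [:-t2, 1:] * [:-t3, 1:])^2)"
    using sextic_with_three_double_roots [OF _ _ ts] by blast
  define e1 where "e1 = t1 + t2 + t3"
  define e2 where "e2 = t1*t2 + t1*t3 + t2*t3"
  define e3 where "e3 = t1*t2*t3"
  have cubic: "[:-t1, 1:] * [:-t2, 1:] * [:-t3, 1:] = [:-e3, e2, -e1, 1:]"
    unfolding e1_def e2_def e3_def by (simp add: algebra_simps)
  have "poly ([:-t1, 1:] * [:-t2, 1:] * [:-t3, 1:]) t1 = 0"
    and "poly ([:-t1, 1:] * [:-t2, 1:] * [:-t3, 1:]) t2 = 0"
    by (simp_all only: poly_mult) simp_all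
  then have "poly [:-e3, e2, -e1, 1:] t1 = 0" "poly [:-e3, e2, -e1, 1:] t2 = 0"
    unfolding cubic .
  with K show False
    unfolding cubic using fibre_discrim_not_cubic_square [OF p r _ ts(1)] by blast
qed

lemma quartic_root_010_L6_eq_0:
  assumes L: "in_dual_cone L" and root: "quartic L 0 1 0 = 0" and L6: "L 6 = 0"
  shows "quartic L a b c = L 0*c^4 + (4*L 1)*b*c^3 + (6*L 2)*b^2*c^2 + (4*L 2)*a*c^3 + L 8*a^4"
proof -
  note coeffs = quartic_root_010_coeffs [OF L root]
  have "0 \<le> L 8 + (4*L 7)*t" for t
    using quartic_nonneg [OF L, of 1 t 0] L6 coeffs(1-3) by (simp add: quartic_def)
  then have "L 7 = 0" using affine_nonneg_imp_const by (metis mult_eq_0_iff zero_neq_numeral)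
  with L6 coeffs(1-3) show ?thesis by (simp add: quartic_def algebra_simps)
qed

lemma quartic_root_010_L6_eq_0_affine_root_unique:
  assumes L: "in_dual_cone L" and root: "quartic L 0 1 0 = 0" and "L 6 = 0" and "L 2 > 0"
    and "quartic L t1 b1 1 = 0" and "quartic L t2 b2 1 = 0"
  shows "t1 = t2 \<and> b1 = b2"
proof (rule nonneg_quadratic_quartic_unique_root)
  have quadratic: "quartic L t b 1 = (6*L 2)*b^2 + (4*L 1)*b + (L 0 + (4*L 2)*t + L 8*t^4)" for t b
    by (simp add: quartic_root_010_L6_eq_0 [OF assms(1-3)] algebra_simps)
  show "0 \<le> (6*L 2)*b^2 + (4*L 1)*b + (L 0 + (4*L 2)*t + L 8*t^4)" for t b
    using quartic_nonneg [OF L] quadratic by metis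
  show "(6*L 2)*b1^2 + (4*L 1)*b1 + (L 0 + (4*L 2)*t1 + L 8*t1^4) = 0"
    "(6*L 2)*b2^2 + (4*L 1)*b2 + (L 0 + (4*L 2)*t2 + L 8*t2^4) = 0"
    using assms(5,6) quadratic by metis+
qed (use \<open>L 2 > 0\<close> in auto)

lemma vanishes_on_line_if_root_010_L6_eq_0:
  assumes L: "in_dual_cone L" and root: "quartic L 0 1 0 = 0" and L6: "L 6 = 0"
    and roots: "Fquart L z1 = 0" "Fquart L z2 = 0"
    and indep: "independent_pair (0, 1, 0) z1" "independent_pair (0, 1, 0) z2"
      "independent_pair z1 z2"
  shows "vanishes_on_line (Fquart L)"
proof -
  note normal_form = quartic_root_010_L6_eq_0 [OF L root L6]
  obtain a1 b1 c1 a2 b2 c2 where z: "z1 = (a1, b1, c1)" "z2 = (a2, b2, c2)"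
    by (metis prod_cases3)
  have roots': "quartic L a1 b1 c1 = 0" "quartic L a2 b2 c2 = 0"
    using roots by (simp_all add: z Fquart_eq_quartic)
  consider "L 2 = 0" | "L 2 > 0" "c1 = 0 \<or> c2 = 0" | "L 2 > 0" "c1 \<noteq> 0" "c2 \<noteq> 0"
    using quartic_root_010_coeffs(4) [OF L root] by linarith
  then show ?thesis
  proof cases
    case 1
    have "0 \<le> L 0 + (4*L 1)*t" for t
      using quartic_nonneg [OF L, of 0 t 1] normal_form 1 by simp
    then have "L 1 = 0" using affine_nonneg_imp_const by (metis mult_eq_0_iff zero_neq_numeral)
    with roots'(1) show ?thesis
      using vanishes_on_line_quartic [OF indep(1) [unfolded z]] normal_form 1 by simp
  next
    case 2
    with roots' normal_form independent_pair_010 indep(1,2) z have "L 8 = 0" by fastforce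
    with normal_form show ?thesis
      by (intro vanishes_on_line_quartic [of 0 1 0 1 0 0])
         (auto simp: independent_pair_def zero_prod_def)
  next
    case 3
    with roots' have "quartic L (a1/c1) (b1/c1) 1 = 0" "quartic L (a2/c2) (b2/c2) 1 = 0"
      using quartic_dehomogenize by (metis mult_eq_0_iff power_not_zero)+
    with 3 have "a1/c1 = a2/c2 \<and> b1/c1 = b2/c2"
      using quartic_root_010_L6_eq_0_affine_root_unique [OF L root L6] by blast
    with independent_pair_dehomogenize [OF indep(3) [unfolded z]] 3 show ?thesis by auto
  qed
qed

lemma quartic_pullback_swap: "quartic (pullback L [:1, 0:] [:0, 1:]) a b c = quartic L c b a"
proof -
  have "pullback L [:1, 0:] [:0, 1:] i = L (8 - i)" if "i \<le> 8" for i
  proof -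
    have "[:1, 0:]^i * [:0, 1:]^(8 - i) = monom (1::real) (8 - i)"
      by (simp add: monom_altdef flip: one_pCons)
    with that show ?thesis
      unfolding pullback_def by (simp add: apolar_poly_def coeff_monom of_bool_def [symmetric])
  qed
  then show ?thesis by (simp add: quartic_def algebra_simps)
qed

lemma quartic_root_010_third_coord_nonzero:
  assumes L: "in_dual_cone L" and root: "quartic L 0 1 0 = 0" and "L 6 > 0"
    and "quartic L a b c = 0" and "a \<noteq> 0 \<or> c \<noteq> 0"
  shows "c \<noteq> 0"
proof
  assume "c = 0"
  with assms(5) have "a \<noteq> 0" by simp
  note coeffs = quartic_root_010_coeffs [OF L root]
  have "quartic L 1 (b/a) u = quartic L 1 (b/a) 0 + (4*L 6)*u + (6*L 2*(b/a)^2)*u^2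
      + (4*L 1*(b/a) + 4*L 2)*u^3 + L 0*u^4" for u
    unfolding quartic_def coeffs(1-3) by (simp add: power_expand algebra_simps)
  moreover have "quartic L 1 (b/a) 0 = 0"
    using assms(4) \<open>c = 0\<close> \<open>a \<noteq> 0\<close> quartic_homogeneous [of L a 1 "b/a" 0] by simp
  ultimately have "4 * L 6 = 0" by (rule quartic_curve_through_root(1) [OF L])
  with \<open>L 6 > 0\<close> show False by simp
qed

lemma vanishes_on_line_if_root_010_L2_eq_0:
  assumes L: "in_dual_cone L" and root: "quartic L 0 1 0 = 0" and L2: "L 2 = 0"
    and roots: "Fquart L z1 = 0" "Fquart L z2 = 0"
    and indep: "independent_pair (0, 1, 0) z1" "independent_pair (0, 1, 0) z2"
      "independent_pair z1 z2"
  shows "vanishes_on_line (Fquart L)"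
proof -
  let ?L = "pullback L [:1, 0:] [:0, 1:]" and ?S = "subst_quad_inv 1 0 0 1"
  have det: "0 * 0 - 1 * 1 \<noteq> (0::real)" by simp
  have swap: "?S (a, b, c) = (c, b, a)" for a b c by (simp add: subst_quad_inv_def)
  have "vanishes_on_line (Fquart ?L)"
  proof (rule vanishes_on_line_if_root_010_L6_eq_0)
    show "in_dual_cone ?L" by (rule in_dual_cone_pullback [OF L])
    show "quartic ?L 0 1 0 = 0" using root unfolding quartic_pullback_swap .
    show "?L 6 = 0" using L2 by (simp add: pullback_def apolar_poly_def numeral_eq_Suc)
    show "Fquart ?L (?S z1) = 0" "Fquart ?L (?S z2) = 0"
      using roots by (simp_all only: Fquart_pullback_subst_quad_inv [OF det])
    show "independent_pair (0, 1, 0) (?S z1)" "independent_pair (0, 1, 0) (?S z2)"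
      "independent_pair (?S z1) (?S z2)"
      using independent_pair_subst_quad_inv [OF det] indep swap [of 0 1 0] by metis+
  qed
  then show ?thesis by (rule vanishes_on_line_pullback [OF det])
qed

lemma quartic_root_010_L2_L6_pos_not_three_roots:
  assumes L: "in_dual_cone L" and root: "quartic L 0 1 0 = 0" and "L 2 > 0" and "L 6 > 0"
    and roots: "Fquart L z1 = 0" "Fquart L z2 = 0" "Fquart L z3 = 0"
    and indep: "independent_pair (0, 1, 0) z1" "independent_pair (0, 1, 0) z2"
      "independent_pair (0, 1, 0) z3"
      "independent_pair z1 z2" "independent_pair z1 z3" "independent_pair z2 z3"
  shows False
proof -
  obtain a1 b1 c1 a2 b2 c2 a3 b3 c3
    where z: "z1 = (a1, b1, c1)" "z2 = (a2, b2, c2)" "z3 = (a3, b3, c3)"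
    by (metis prod_cases3)
  have roots': "quartic L a1 b1 c1 = 0" "quartic L a2 b2 c2 = 0" "quartic L a3 b3 c3 = 0"
    using roots by (simp_all add: z Fquart_eq_quartic)
  have c: "c1 \<noteq> 0" "c2 \<noteq> 0" "c3 \<noteq> 0"
    using quartic_root_010_third_coord_nonzero [OF L root \<open>L 6 > 0\<close>] roots'
      independent_pair_010 indep(1-3)
    unfolding z by blast+
  show False
  proof (rule quartic_root_010_not_three_affine_roots [OF L root \<open>L 2 > 0\<close> \<open>L 6 > 0\<close>])
    show "quartic L (a1/c1) (b1/c1) 1 = 0" "quartic L (a2/c2) (b2/c2) 1 = 0"
      "quartic L (a3/c3) (b3/c3) 1 = 0"
      using roots' c quartic_dehomogenize by (metis mult_eq_0_iff power_not_zero)+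
    show "(a1/c1, b1/c1) \<noteq> (a2/c2, b2/c2)" "(a1/c1, b1/c1) \<noteq> (a3/c3, b3/c3)"
      "(a2/c2, b2/c2) \<noteq> (a3/c3, b3/c3)"
      using independent_pair_dehomogenize indep(4-6) c unfolding z by blast+
  qed
qed

lemma vanishes_on_line_if_root_010:
  assumes L: "in_dual_cone L" and root: "quartic L 0 1 0 = 0"
    and roots: "Fquart L z1 = 0" "Fquart L z2 = 0" "Fquart L z3 = 0"
    and indep: "independent_pair (0, 1, 0) z1" "independent_pair (0, 1, 0) z2"
      "independent_pair (0, 1, 0) z3"
      "independent_pair z1 z2" "independent_pair z1 z3" "independent_pair z2 z3"
  shows "vanishes_on_line (Fquart L)"
proof -
  note coeffs = quartic_root_010_coeffs [OF L root]
  consider "L 6 = 0" | "L 2 = 0" | "L 2 > 0" "L 6 > 0" using coeffs(4,5) by linarith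
  then show ?thesis
  proof cases
    case 1
    from vanishes_on_line_if_root_010_L6_eq_0 [OF L root 1 roots(1,2) indep(1,2,4)]
    show ?thesis .
  next
    case 2
    from vanishes_on_line_if_root_010_L2_eq_0 [OF L root 2 roots(1,2) indep(1,2,4)]
    show ?thesis .
  next
    case 3
    from quartic_root_010_L2_L6_pos_not_three_roots [OF L root 3 roots indep]
    show ?thesis ..
  qed
qed

section \<open>Normal forms of binary quadratics\<close>

definition quad_discrim :: "real \<times> real \<times> real \<Rightarrow> real" where
  "quad_discrim v = (case v of (a, b, c) \<Rightarrow> b^2 - 4*a*c)"

lemma quad_discrim_simp [simp]: "quad_discrim (a, b, c) = b^2 - 4*a*c"
  by (simp add: quad_discrim_def)

lemma definite_quad_normal_form:
  assumes "quad_discrim (a, b, c) < 0"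
  obtains u0 u1 w0 w1 k where "u1*w0 - u0*w1 \<noteq> 0" and "k \<noteq> 0"
    and "subst_quad u0 u1 w0 w1 (1, 0, 1) = k *\<^sub>R (a, b, c)"
proof -
  from assms have a: "a \<noteq> 0" by (cases "a = 0") auto
  define m where "m = (4*a*c - b^2) / (4*a^2)"
  from assms a have "m > 0" unfolding m_def by (simp add: divide_pos_pos)
  then have "(sqrt m)^2 = m" by simp
  show ?thesis
  proof (rule that)
    show "1 * sqrt m - b/(2*a) * 0 \<noteq> 0" using \<open>m > 0\<close> by simp
    show "1/a \<noteq> 0" using a by simp
    show "subst_quad (b/(2*a)) 1 (sqrt m) 0 (1, 0, 1) = (1/a) *\<^sub>R (a, b, c)"
      using a \<open>(sqrt m)^2 = m\<close> by (simp add: subst_quad_def m_def field_simps power2_eq_square)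
  qed
qed

lemma indefinite_quad_normal_form:
  assumes "quad_discrim (a, b, c) > 0"
  obtains u0 u1 w0 w1 where "u1*w0 - u0*w1 \<noteq> 0" and "subst_quad u0 u1 w0 w1 (0, 1, 0) = (a, b, c)"
proof (cases "a = 0")
  case True
  with assms have "b \<noteq> 0" by auto
  show ?thesis
  proof (rule that)
    show "b * 1 - c * 0 \<noteq> 0" using \<open>b \<noteq> 0\<close> by simp
    show "subst_quad c b 1 0 (0, 1, 0) = (a, b, c)" using True by (simp add: subst_quad_def)
  qed
next
  case False
  define s where "s = sqrt (b^2 - 4*a*c)"
  from assms have s: "s > 0" "s^2 = b^2 - 4*a*c" unfolding s_def by auto
  \<comment> \<open>factor the form through its two real roots \<open>(-b \<plusminus> s) / (2 a)\<close>\<close>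
  define r1 where "r1 = (-b + s) / (2*a)"
  define r2 where "r2 = (-b - s) / (2*a)"
  show ?thesis
  proof (rule that)
    show "a*(-r2) - (-a*r1)*1 \<noteq> 0"
      unfolding r1_def r2_def using False s(1) by (simp add: field_simps)
    show "subst_quad (-a*r1) a (-r2) 1 (0, 1, 0) = (a, b, c)"
      unfolding subst_quad_def r1_def r2_def using False s(2)
      by (simp add: field_simps power2_eq_square) algebra
  qed
qed

lemma degenerate_quad_is_square:
  assumes "quad_discrim (a, b, c) = 0" and "(a, b, c) \<noteq> 0"
  obtains u0 u1 k where "k \<noteq> 0" and "(a, b, c) = k *\<^sub>R (u1^2, 2*u0*u1, u0^2)"
proof (cases "a = 0")
  case True
  with assms have "b = 0" and "c \<noteq> 0" by (auto simp: zero_prod_def)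
  show ?thesis
  proof (rule that)
    show "c \<noteq> 0" by fact
    show "(a, b, c) = c *\<^sub>R (0^2, 2*1*0, 1^2)" using True \<open>b = 0\<close> by simp
  qed
next
  case False
  with assms(1) have "(a, b, c) = a *\<^sub>R (1^2, 2*(b/(2*a))*1, (b/(2*a))^2)"
    by (simp add: field_simps power2_eq_square)
  with False show ?thesis by (rule that)
qed

lemma vanishes_on_line_if_definite_root:
  assumes L: "in_dual_cone L" and root: "Fquart L z = 0" and "quad_discrim z < 0"
    and root': "Fquart L z' = 0" and indep: "independent_pair z z'"
  shows "vanishes_on_line (Fquart L)"
proof -
  obtain u0 u1 w0 w1 k where det: "u1*w0 - u0*w1 \<noteq> 0" and "k \<noteq> 0"
    and T: "subst_quad u0 u1 w0 w1 (1, 0, 1) = k *\<^sub>R z"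
    using definite_quad_normal_form assms(3) by (metis prod_cases3)
  let ?L = "pullback L [:u0, u1:] [:w0, w1:]" and ?S = "subst_quad_inv u0 u1 w0 w1"
  have L': "in_dual_cone ?L" by (rule in_dual_cone_pullback [OF L])
  have "Fquart ?L (1, 0, 1) = 0" by (simp add: Fquart_pullback T Fquart_scaleR root)
  then have shift: "quartic ?L (a + s) b (c + s) = quartic ?L a b c" for a b c s
    by (simp add: Fquart_eq_quartic quartic_shift_invariant_if_root_101 [OF L'])
  have "independent_pair (?S (k *\<^sub>R z)) (?S z')"
    by (rule independent_pair_subst_quad_inv [OF det independent_pair_scaleR [OF \<open>k \<noteq> 0\<close> indep]])
  moreover obtain p q r where S': "?S z' = (p, q, r)" by (metis prod_cases3)
  ultimately have indep': "independent_pair (1, 0, 1) (p, q, r)"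
    by (simp add: T [symmetric] subst_quad_inverse [OF det])
  have "quartic ?L p q r = 0"
    using Fquart_pullback_subst_quad_inv [OF det, of L z'] root' by (simp add: S' Fquart_eq_quartic)
  with indep' have "vanishes_on_line (Fquart ?L)"
    by (intro vanishes_on_line_quartic [of 1 0 1 p q r]) (simp_all add: shift)
  then show ?thesis by (rule vanishes_on_line_pullback [OF det])
qed

lemma vanishes_on_line_if_indefinite_root:
  assumes L: "in_dual_cone L" and root: "Fquart L z = 0" and "quad_discrim z > 0"
    and roots: "Fquart L z1 = 0" "Fquart L z2 = 0" "Fquart L z3 = 0"
    and indep: "independent_pair z z1" "independent_pair z z2" "independent_pair z z3"
      "independent_pair z1 z2" "independent_pair z1 z3" "independent_pair z2 z3"
  shows "vanishes_on_line (Fquart L)"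
proof -
  obtain u0 u1 w0 w1 where det: "u1*w0 - u0*w1 \<noteq> 0" and T: "subst_quad u0 u1 w0 w1 (0, 1, 0) = z"
    using indefinite_quad_normal_form assms(3) by (metis prod_cases3)
  let ?L = "pullback L [:u0, u1:] [:w0, w1:]" and ?S = "subst_quad_inv u0 u1 w0 w1"
  have S: "?S z = (0, 1, 0)" unfolding T [symmetric] by (rule subst_quad_inverse [OF det])
  have "vanishes_on_line (Fquart ?L)"
  proof (rule vanishes_on_line_if_root_010)
    show "in_dual_cone ?L" by (rule in_dual_cone_pullback [OF L])
    show "quartic ?L 0 1 0 = 0"
      using Fquart_pullback_subst_quad_inv [OF det, of L z] root by (simp add: S Fquart_eq_quartic)
    show "Fquart ?L (?S z1) = 0" "Fquart ?L (?S z2) = 0" "Fquart ?L (?S z3) = 0"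
      using roots by (simp_all only: Fquart_pullback_subst_quad_inv [OF det])
    show "independent_pair (0, 1, 0) (?S z1)" "independent_pair (0, 1, 0) (?S z2)"
      "independent_pair (0, 1, 0) (?S z3)" "independent_pair (?S z1) (?S z2)"
      "independent_pair (?S z1) (?S z3)" "independent_pair (?S z2) (?S z3)"
      using independent_pair_subst_quad_inv [OF det] indep S by metis+
  qed
  then show ?thesis by (rule vanishes_on_line_pullback [OF det])
qed

lemma vanishes_on_line_if_square_roots:
  assumes L: "in_dual_cone L" and roots: "Fquart L z = 0" "Fquart L z' = 0"
    and indep: "independent_pair z z'" and "quad_discrim z = 0" and "quad_discrim z' = 0"
  shows "vanishes_on_line (Fquart L)"
proof -
  from indep have "z \<noteq> 0" "z' \<noteq> 0"
    unfolding independent_pair_def by (metis scale_zero_left)+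
  then obtain u0 u1 k w0 w1 k' where "k \<noteq> 0" "k' \<noteq> 0"
    and z: "z = k *\<^sub>R (u1^2, 2*u0*u1, u0^2)" and z': "z' = k' *\<^sub>R (w1^2, 2*w0*w1, w0^2)"
    using degenerate_quad_is_square assms(5,6) by (metis prod_cases3)
  have det: "u1*w0 - u0*w1 \<noteq> 0"
  proof
    assume dependent: "u1*w0 - u0*w1 = 0"
    obtain \<mu> where "w0 = \<mu>*u0" "w1 = \<mu>*u1"
    proof (cases "u1 = 0")
      case True
      with \<open>z \<noteq> 0\<close> have "u0 \<noteq> 0" by (auto simp: z zero_prod_def)
      with True dependent show ?thesis using that [of "w0/u0"] by auto
    next
      case False
      with dependent show ?thesis using that [of "w1/u1"] by (auto simp: field_simps)
    qed
    then have "z' = (k' * \<mu>^2 / k) *\<^sub>R z"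
      unfolding z z' using \<open>k \<noteq> 0\<close> by (simp add: field_simps power2_eq_square)
    with indep show False unfolding independent_pair_def by blast
  qed
  let ?L = "pullback L [:u0, u1:] [:w0, w1:]"
  have "subst_quad u0 u1 w0 w1 (1, 0, 0) = (1/k) *\<^sub>R z"
    and "subst_quad u0 u1 w0 w1 (0, 0, 1) = (1/k') *\<^sub>R z'"
    using \<open>k \<noteq> 0\<close> \<open>k' \<noteq> 0\<close> by (simp_all add: z z' subst_quad_def)
  then have "quartic ?L 1 0 0 = 0" "quartic ?L 0 0 1 = 0"
    using roots by (simp_all add: Fquart_eq_quartic [symmetric] Fquart_pullback Fquart_scaleR)
  then have "quartic ?L a b c = 0" for a b c
    by (rule quartic_eq_0_if_roots_100_001 [OF in_dual_cone_pullback [OF L]])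
  then have "vanishes_on_line (Fquart ?L)"
    by (intro vanishes_on_line_quartic [of 0 1 0 1 0 0])
       (auto simp: independent_pair_def zero_prod_def)
  then show ?thesis by (rule vanishes_on_line_pullback [OF det])
qed

lemma vanishes_on_line_if_four_roots:
  fixes z :: "nat \<Rightarrow> real \<times> real \<times> real"
  assumes L: "in_dual_cone L" and roots: "\<And>i. i < 4 \<Longrightarrow> Fquart L (z i) = 0"
    and indep: "\<And>i j. i < 4 \<Longrightarrow> j < 4 \<Longrightarrow> i \<noteq> j \<Longrightarrow> independent_pair (z i) (z j)"
  shows "vanishes_on_line (Fquart L)"
proof -
  consider i where "i < 4" "quad_discrim (z i) < 0" | i where "i < 4" "quad_discrim (z i) > 0"
    | "quad_discrim (z 0) = 0" "quad_discrim (z 1) = 0"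
  proof -
    have "(0::nat) < 4" "(1::nat) < 4" by simp_all
    then show thesis using that by (meson linorder_neqE_linordered_idom)
  qed
  then show ?thesis
  proof cases
    case (1 i)
    define j :: nat where "j = (if i = 0 then 1 else 0)"
    have "j < 4" "i \<noteq> j" unfolding j_def by auto
    with 1 show ?thesis
      using vanishes_on_line_if_definite_root [OF L] roots indep by blast
  next
    case (2 i)
    define j k l where "j = (i + 1) mod 4" and "k = (i + 2) mod 4" and "l = (i + 3) mod 4"
    from \<open>i < 4\<close> have "i = 0 \<or> i = 1 \<or> i = 2 \<or> i = 3" by linarith
    then have "j < 4" "k < 4" "l < 4" "distinct [i, j, k, l]"
      unfolding j_def k_def l_def by (elim disjE; simp)+
    with 2 show ?thesis
      by (intro vanishes_on_line_if_indefinite_root [of L "z i" "z j" "z k" "z l"])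
         (simp_all add: L roots indep)
  next
    case 3
    then show ?thesis
      using vanishes_on_line_if_square_roots [OF L roots [of 0] roots [of 1] indep [of 0 1]] by simp
  qed
qed

lemma independent_roots_if_card_proj_real_zeros:
  assumes "n \<le> card (proj_real_zeros F)"
  obtains z :: "nat \<Rightarrow> real \<times> real \<times> real"
  where "\<And>i. i < n \<Longrightarrow> F (z i) = 0"
    and "\<And>i j. i < n \<Longrightarrow> j < n \<Longrightarrow> i \<noteq> j \<Longrightarrow> independent_pair (z i) (z j)"
proof -
  obtain B where B: "B \<subseteq> proj_real_zeros F" "card B = n" "finite B"
    using obtain_subset_with_card_n [OF assms] by blast
  obtain line where line: "bij_betw line {0..<n} B"
    using ex_bij_betw_nat_finite [OF B(3)] unfolding B(2) by blast
  have "\<forall>i\<in>{0..<n}. \<exists>v. v \<noteq> 0 \<and> F v = 0 \<and> line i = {t *\<^sub>R v | t. True}"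
    using bij_betw_apply [OF line] B(1) unfolding proj_real_zeros_def by blast
  from bchoice [OF this] obtain z
    where z: "\<forall>i\<in>{0..<n}. z i \<noteq> 0 \<and> F (z i) = 0 \<and> line i = {t *\<^sub>R z i | t. True}"
    by blast
  show ?thesis
  proof (rule that)
    show "F (z i) = 0" if "i < n" for i using z that by simp
    show "independent_pair (z i) (z j)" if "i < n" "j < n" "i \<noteq> j" for i j
    proof (rule independent_pair_if_lines_differ)
      show "z i \<noteq> 0" "z j \<noteq> 0" using z that by simp_all
      have "line i \<noteq> line j"
        using bij_betw_imp_inj_on [OF line] that by (auto dest: inj_onD)
      then show "{t *\<^sub>R z i | t. True} \<noteq> {t *\<^sub>R z j | t. True}"
        using z that by simp
    qed
  qed
qed

theorem mainTheorem12:
  fixes L :: "nat \<Rightarrow> real"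
  assumes "in_dual_cone L"
    and "finite (proj_real_zeros (Fquart L))"
  shows "card (proj_real_zeros (Fquart L)) \<le> 3"
proof (rule ccontr)
  assume "\<not> card (proj_real_zeros (Fquart L)) \<le> 3"
  then have four: "4 \<le> card (proj_real_zeros (Fquart L))" by simp
  obtain z :: "nat \<Rightarrow> real \<times> real \<times> real"
    where "\<And>i. i < 4 \<Longrightarrow> Fquart L (z i) = 0"
      and "\<And>i j. i < 4 \<Longrightarrow> j < 4 \<Longrightarrow> i \<noteq> j \<Longrightarrow> independent_pair (z i) (z j)"
    using independent_roots_if_card_proj_real_zeros [OF four] by blast
  then have "vanishes_on_line (Fquart L)" by (rule vanishes_on_line_if_four_roots [OF assms(1)])
  with vanishes_on_line_infinite_zeros assms(2) show False by blast
qed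

end
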